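(* Let $n\ge 1$ and let $u:([0,1]^n,d_n)\to([0,1],d)$ be uniformly continuous, where $d$ is the standard metric on $[0,1]$ and $d_n$ the max-metric on $[0,1]^n$. The following are equivalent: (1) For every complete metric space $(Y,d)$ of diameter at most 1 and all uniformly continuous $\phi_i,\phi_i':Y\to[0,1]$ ($i=1,\dots,n$) with $\phi_i\simeq\phi_i'$ for each $i$, one has $u(\phi_1,\dots,\phi_n)\simeq u(\phi_1',\dots,\phi_n')$. (2) For all $p,q\in[0,1]^n$ such that $p_i=0\iff q_i=0$ for every $i$, either $u(p)=u(q)=0$, or $u(p)>0$ and $u(q)>0$. (3) There is $A\subseteq\mathcal P(\{1,\dots,n\})$ such that $u^{-1}(0)=\bigcup_{K\in A}\{z\in[0,1]^n : z_i=0\iff i\in K\}$.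
   Context: For functions $\alpha,\beta:Y\to[0,1]$ write $\alpha\sqsubseteq\beta$ if for every $\varepsilon>0$ there exists $\delta>0$ such that for all $y$, $\alpha(y)\le\delta$ implies $\beta(y)\le\varepsilon$; and $\alpha\simeq\beta$ if $\alpha\sqsubseteq\beta$ and $\beta\sqsubseteq\alpha$. For functions $\phi_1,\dots,\phi_n:Y\to[0,1]$, $u(\phi_1,\dots,\phi_n)$ denotes the function $y\mapsto u(\phi_1(y),\dots,\phi_n(y))$. *)

theory Defs
  imports "HOL-Analysis.Analysis"
begin

text \<open>The cube [0,1]^n, with coordinates indexed by a finite type 'i (so n = CARD('i) >= 1).\<close>
definition unit_cube :: "('i::finite \<Rightarrow> real) set" where
  "unit_cube = {z. \<forall>i. 0 \<le> z i \<and> z i \<le> 1}"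

definition ucont_cube :: "(('i::finite \<Rightarrow> real) \<Rightarrow> real) \<Rightarrow> bool" where
  "ucont_cube u \<longleftrightarrow> (\<forall>z\<in>unit_cube. 0 \<le> u z \<and> u z \<le> 1) \<and>
     (\<forall>e>0. \<exists>\<delta>>0. \<forall>p\<in>unit_cube. \<forall>q\<in>unit_cube.
        (Max (range (\<lambda>i. \<bar>p i - q i\<bar>)) < \<delta>) \<longrightarrow> \<bar>u p - u q\<bar> < e)"

definition ucont_unit :: "'y set \<Rightarrow> ('y \<Rightarrow> 'y \<Rightarrow> real) \<Rightarrow> ('y \<Rightarrow> real) \<Rightarrow> bool" where
  "ucont_unit Y d \<phi> \<longleftrightarrow> (\<forall>y\<in>Y. 0 \<le> \<phi> y \<and> \<phi> y \<le> 1) \<and>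
     (\<forall>e>0. \<exists>\<delta>>0. \<forall>x\<in>Y. \<forall>y\<in>Y. d x y < \<delta> \<longrightarrow> \<bar>\<phi> x - \<phi> y\<bar> < e)"

definition sqle :: "'y set \<Rightarrow> ('y \<Rightarrow> real) \<Rightarrow> ('y \<Rightarrow> real) \<Rightarrow> bool" where
  "sqle Y \<alpha> \<beta> \<longleftrightarrow> (\<forall>\<epsilon>>0. \<exists>\<delta>>0. \<forall>y\<in>Y. \<alpha> y \<le> \<delta> \<longrightarrow> \<beta> y \<le> \<epsilon>)"

definition sqeq :: "'y set \<Rightarrow> ('y \<Rightarrow> real) \<Rightarrow> ('y \<Rightarrow> real) \<Rightarrow> bool" where
  "sqeq Y \<alpha> \<beta> \<longleftrightarrow> sqle Y \<alpha> \<beta> \<and> sqle Y \<beta> \<alpha>"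

end

theory Submission
  imports Defs
begin

text \<open>Direction (2) \<Longrightarrow> (1) is a compactness argument. If \<open>u(\<phi>) \<sqsubseteq> u(\<phi>')\<close> failed, there
would be points \<open>y\<^sub>k\<close> with \<open>u(\<phi>(y\<^sub>k)) \<rightarrow> 0\<close> but \<open>u(\<phi>'(y\<^sub>k)) > e\<close>. Passing to a convergent
subsequence of \<open>(\<phi>(y\<^sub>k), \<phi>'(y\<^sub>k))\<close> in the compact cube gives a limit \<open>(p, q)\<close> with \<open>u p = 0\<close>
and \<open>u q \<ge> e\<close>, while \<open>\<phi>\<^sub>i \<simeq> \<phi>'\<^sub>i\<close> forces \<open>p\<^sub>i = 0 \<longleftrightarrow> q\<^sub>i = 0\<close>, contradicting (2).
Direction (1) \<Longrightarrow> (2) tests (1) with constant functions on a discrete space, where \<open>\<simeq>\<close>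
only records which values vanish. Condition (3) just says that the zero set of \<open>u\<close> is a
union of zero patterns, which is (2) for the nonnegative function \<open>u\<close>.\<close>

abbreviation zero_pattern_invariant :: "(('i::finite \<Rightarrow> real) \<Rightarrow> real) \<Rightarrow> bool" where
  "zero_pattern_invariant u \<equiv>
     \<forall>p\<in>unit_cube. \<forall>q\<in>unit_cube. (\<forall>i. p i = 0 \<longleftrightarrow> q i = 0) \<longrightarrow>
       (u p = 0 \<and> u q = 0) \<or> (u p > 0 \<and> u q > 0)"

lemma unit_cube_nonneg: "z \<in> unit_cube \<Longrightarrow> 0 \<le> z i"
  by (simp add: unit_cube_def)

lemma compact_unit_cube: "compact (unit_cube :: ('i::finite \<Rightarrow> real) set)"
proof -
  have "unit_cube = PiE (UNIV::'i set) (\<lambda>_. {0..1::real})"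
    by (auto simp: unit_cube_def PiE_def)
  moreover have "compactin (product_topology (\<lambda>_. euclidean) UNIV) (PiE (UNIV::'i set) (\<lambda>_. {0..1::real}))"
    by (simp add: compactin_PiE)
  ultimately show ?thesis
    by (simp add: euclidean_product_topology)
qed

lemma tendsto_coordinate:
  fixes f :: "'a \<Rightarrow> 'i \<Rightarrow> 'b::topological_space"
  assumes "(f \<longlongrightarrow> l) F"
  shows "((\<lambda>x. f x i) \<longlongrightarrow> l i) F"
  using continuous_on_tendsto_compose[OF continuous_on_product_coordinates assms] by simp

lemma ucont_cube_nonneg: "ucont_cube u \<Longrightarrow> z \<in> unit_cube \<Longrightarrow> 0 \<le> u z"
  by (simp add: ucont_cube_def)

lemma ucont_cube_imp_continuous_on:
  fixes u :: "('i::finite \<Rightarrow> real) \<Rightarrow> real"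
  assumes "ucont_cube u"
  shows "continuous_on unit_cube u"
  unfolding continuous_on_def
proof (intro ballI tendstoI)
  fix z :: "'i \<Rightarrow> real" and e :: real
  assume z: "z \<in> unit_cube" and "e > 0"
  then obtain \<delta> where "\<delta> > 0" and close: "\<forall>p\<in>unit_cube. \<forall>q\<in>unit_cube.
      Max (range (\<lambda>i. \<bar>p i - q i\<bar>)) < \<delta> \<longrightarrow> \<bar>u p - u q\<bar> < e"
    using assms unfolding ucont_cube_def by blast
  have "\<forall>\<^sub>F p in at z within unit_cube. \<forall>i. \<bar>p i - z i\<bar> < \<delta>"
  proof (rule eventually_all_finite)
    fix i
    show "\<forall>\<^sub>F p in at z within unit_cube. \<bar>p i - z i\<bar> < \<delta>"
      using tendstoD[OF tendsto_coordinate[OF tendsto_ident_at[of z unit_cube], of i] \<open>\<delta> > 0\<close>]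
      by (simp add: dist_real_def)
  qed
  moreover have "\<forall>\<^sub>F p in at z within unit_cube. p \<in> unit_cube"
    by (simp add: eventually_at_filter)
  ultimately show "\<forall>\<^sub>F p in at z within unit_cube. dist (u p) (u z) < e"
    by eventually_elim (use close z in \<open>auto simp: dist_real_def\<close>)
qed

lemma ucont_unit_const: "0 \<le> c \<Longrightarrow> c \<le> 1 \<Longrightarrow> ucont_unit Y d (\<lambda>_. c)"
  by (simp add: ucont_unit_def)

lemma sqle_const_iff:
  assumes "Y \<noteq> {}"
  shows "sqle Y (\<lambda>_. a) (\<lambda>_. b) \<longleftrightarrow> (a \<le> 0 \<longrightarrow> b \<le> 0)"
proof
  assume sq: "sqle Y (\<lambda>_. a) (\<lambda>_. b)"
  show "a \<le> 0 \<longrightarrow> b \<le> 0"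
  proof
    assume "a \<le> 0"
    have "b \<le> \<epsilon>" if "\<epsilon> > 0" for \<epsilon>
    proof -
      obtain \<delta> where "\<delta> > 0" and "\<forall>y\<in>Y. a \<le> \<delta> \<longrightarrow> b \<le> \<epsilon>"
        using sq \<open>\<epsilon> > 0\<close> unfolding sqle_def by blast
      then show ?thesis
        using \<open>a \<le> 0\<close> assms by auto
    qed
    then show "b \<le> 0"
      by (meson dense not_le)
  qed
next
  assume impl: "a \<le> 0 \<longrightarrow> b \<le> 0"
  show "sqle Y (\<lambda>_. a) (\<lambda>_. b)"
    unfolding sqle_def
  proof (intro allI impI)
    fix \<epsilon> :: real
    assume "\<epsilon> > 0"
    show "\<exists>\<delta>>0. \<forall>y\<in>Y. a \<le> \<delta> \<longrightarrow> b \<le> \<epsilon>"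
    proof (cases "a \<le> 0")
      case True
      then show ?thesis
        using impl \<open>\<epsilon> > 0\<close> by (intro exI[of _ 1]) auto
    next
      case False
      then show ?thesis
        by (intro exI[of _ "a / 2"]) auto
    qed
  qed
qed

lemma sqeq_const_iff: "Y \<noteq> {} \<Longrightarrow> sqeq Y (\<lambda>_. a) (\<lambda>_. b) \<longleftrightarrow> (a \<le> 0 \<longleftrightarrow> b \<le> 0)"
  by (auto simp: sqeq_def sqle_const_iff)

lemma sqle_tendsto_zero:
  assumes "sqle Y \<alpha> \<beta>" and "\<And>k. y k \<in> Y"
    and "(\<lambda>k. \<alpha> (y k)) \<longlonglongrightarrow> 0" and "(\<lambda>k. \<beta> (y k)) \<longlonglongrightarrow> l"
  shows "l \<le> 0"
proof -
  have "l \<le> \<epsilon>" if "\<epsilon> > 0" for \<epsilon>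
  proof -
    obtain \<delta> where "\<delta> > 0" and \<delta>: "\<forall>y\<in>Y. \<alpha> y \<le> \<delta> \<longrightarrow> \<beta> y \<le> \<epsilon>"
      using assms(1) \<open>\<epsilon> > 0\<close> unfolding sqle_def by blast
    have "\<forall>\<^sub>F k in sequentially. \<alpha> (y k) < \<delta>"
      using order_tendstoD(2)[OF assms(3) \<open>\<delta> > 0\<close>] .
    then have "\<forall>\<^sub>F k in sequentially. \<beta> (y k) \<le> \<epsilon>"
      by eventually_elim (use \<delta> assms(2) in auto)
    then show ?thesis
      by (rule tendsto_upperbound[OF assms(4)]) simp
  qed
  then show ?thesis
    by (meson dense not_le)
qed

lemma sqeq_tendsto_zero_iff:
  assumes "sqeq Y \<alpha> \<beta>" and "\<And>k. y k \<in> Y"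
    and "(\<lambda>k. \<alpha> (y k)) \<longlonglongrightarrow> s" and "(\<lambda>k. \<beta> (y k)) \<longlonglongrightarrow> t"
    and "0 \<le> s" and "0 \<le> t"
  shows "s = 0 \<longleftrightarrow> t = 0"
proof
  assume "s = 0"
  then have "t \<le> 0"
    using assms(1-4) unfolding sqeq_def by (intro sqle_tendsto_zero[of Y \<alpha> \<beta> y]) auto
  then show "t = 0"
    using \<open>0 \<le> t\<close> by simp
next
  assume "t = 0"
  then have "s \<le> 0"
    using assms(1-4) unfolding sqeq_def by (intro sqle_tendsto_zero[of Y \<beta> \<alpha> y]) auto
  then show "s = 0"
    using \<open>0 \<le> s\<close> by simp
qed

lemma unit_cube_pair_convergent_subseq:
  fixes a b :: "nat \<Rightarrow> 'i::finite \<Rightarrow> real"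
  assumes "\<And>k. a k \<in> unit_cube" and "\<And>k. b k \<in> unit_cube"
  obtains p q r where "p \<in> unit_cube" "q \<in> unit_cube" "strict_mono r"
    "(\<lambda>k. a (r k)) \<longlonglongrightarrow> p" "(\<lambda>k. b (r k)) \<longlonglongrightarrow> q"
proof -
  have "seq_compact (unit_cube \<times> unit_cube :: (('i \<Rightarrow> real) \<times> ('i \<Rightarrow> real)) set)"
    by (intro compact_imp_seq_compact compact_Times compact_unit_cube)
  moreover have "\<forall>k. (a k, b k) \<in> unit_cube \<times> unit_cube"
    using assms by blast
  ultimately obtain l r where l: "l \<in> unit_cube \<times> unit_cube" and "strict_mono r"
    and lim: "((\<lambda>k. (a k, b k)) \<circ> r) \<longlonglongrightarrow> l"
    by (rule seq_compactE)
  have "fst l \<in> unit_cube" "snd l \<in> unit_cube"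
    using l by (auto simp: mem_Times_iff)
  moreover have "(\<lambda>k. a (r k)) \<longlonglongrightarrow> fst l" "(\<lambda>k. b (r k)) \<longlonglongrightarrow> snd l"
    using tendsto_fst[OF lim] tendsto_snd[OF lim] by (simp_all add: o_def)
  ultimately show ?thesis
    using that \<open>strict_mono r\<close> by blast
qed

lemma sqle_failure_sequence:
  assumes "\<not> sqle Y \<alpha> \<beta>"
  obtains e y where "e > 0" "\<And>k. y k \<in> Y"
    "\<And>k. \<alpha> (y k) \<le> inverse (real (Suc k))" "\<And>k. \<beta> (y k) > e"
proof -
  obtain e where "e > 0" and bad: "\<forall>\<delta>>0. \<exists>y\<in>Y. \<alpha> y \<le> \<delta> \<and> \<beta> y > e"
    using assms unfolding sqle_def by (auto simp: not_le)
  then have "\<forall>k. \<exists>y\<in>Y. \<alpha> y \<le> inverse (real (Suc k)) \<and> \<beta> y > e"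
    by simp
  then show ?thesis
    using that \<open>e > 0\<close> by metis
qed

lemma sqle_comp_if_zero_pattern_invariant:
  fixes u :: "('i::finite \<Rightarrow> real) \<Rightarrow> real"
  assumes u: "ucont_cube u" and inv: "zero_pattern_invariant u"
    and \<phi>: "\<And>y. y \<in> Y \<Longrightarrow> (\<lambda>i. \<phi> i y) \<in> unit_cube"
    and \<phi>': "\<And>y. y \<in> Y \<Longrightarrow> (\<lambda>i. \<phi>' i y) \<in> unit_cube"
    and equiv: "\<And>i. sqeq Y (\<phi> i) (\<phi>' i)"
  shows "sqle Y (\<lambda>y. u (\<lambda>i. \<phi> i y)) (\<lambda>y. u (\<lambda>i. \<phi>' i y))"
proof (rule ccontr)
  assume fails: "\<not> ?thesis"
  obtain e y where "e > 0" and y: "\<And>k. y k \<in> Y"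
    and small: "\<And>k. u (\<lambda>i. \<phi> i (y k)) \<le> inverse (real (Suc k))"
    and large: "\<And>k. u (\<lambda>i. \<phi>' i (y k)) > e"
    using sqle_failure_sequence[OF fails] by metis
  define a where "a k = (\<lambda>i. \<phi> i (y k))" for k
  define b where "b k = (\<lambda>i. \<phi>' i (y k))" for k
  have a_cube: "a k \<in> unit_cube" and b_cube: "b k \<in> unit_cube" for k
    using \<phi> \<phi>' y by (simp_all add: a_def b_def)
  obtain p q r where pq: "p \<in> unit_cube" "q \<in> unit_cube" and "strict_mono r"
    and a_lim: "(\<lambda>k. a (r k)) \<longlonglongrightarrow> p" and b_lim: "(\<lambda>k. b (r k)) \<longlonglongrightarrow> q"
    using unit_cube_pair_convergent_subseq[OF a_cube b_cube] .
  have "(\<lambda>k. u (a k)) \<longlonglongrightarrow> 0"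
  proof (rule real_tendsto_sandwich[where f = "\<lambda>_. 0" and h = "\<lambda>k. inverse (real (Suc k))"])
    show "\<forall>\<^sub>F k in sequentially. 0 \<le> u (a k)"
      using ucont_cube_nonneg[OF u a_cube] by simp
    show "\<forall>\<^sub>F k in sequentially. u (a k) \<le> inverse (real (Suc k))"
      using small by (simp add: a_def)
  qed (use LIMSEQ_inverse_real_of_nat in simp_all)
  then have "(\<lambda>k. u (a (r k))) \<longlonglongrightarrow> 0"
    using LIMSEQ_subseq_LIMSEQ[OF _ \<open>strict_mono r\<close>] by (simp add: o_def)
  moreover have "(\<lambda>k. u (a (r k))) \<longlonglongrightarrow> u p"
    using continuous_on_tendsto_compose[OF ucont_cube_imp_continuous_on[OF u] a_lim pq(1)] a_cube by simp
  ultimately have "u p = 0"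
    using LIMSEQ_unique by blast
  have "(\<lambda>k. u (b (r k))) \<longlonglongrightarrow> u q"
    using continuous_on_tendsto_compose[OF ucont_cube_imp_continuous_on[OF u] b_lim pq(2)] b_cube by simp
  then have "u q \<ge> e"
    using large by (intro LIMSEQ_le_const) (auto simp: b_def less_imp_le)
  have yr: "(y \<circ> r) k \<in> Y" for k
    using y by simp
  have a_i: "(\<lambda>k. \<phi> i ((y \<circ> r) k)) \<longlonglongrightarrow> p i" and b_i: "(\<lambda>k. \<phi>' i ((y \<circ> r) k)) \<longlonglongrightarrow> q i" for i
    using tendsto_coordinate[OF a_lim, of i] tendsto_coordinate[OF b_lim, of i] by (simp_all add: a_def b_def)
  have "p i = 0 \<longleftrightarrow> q i = 0" for i
    using sqeq_tendsto_zero_iff[OF equiv yr a_i b_i] unit_cube_nonneg pq by blast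
  then have "u q = 0"
    using inv pq \<open>u p = 0\<close> by auto
  then show False
    using \<open>u q \<ge> e\<close> \<open>e > 0\<close> by linarith
qed

lemma zero_pattern_invariant_if_sqeq_on_constants:
  fixes u :: "('i::finite \<Rightarrow> real) \<Rightarrow> real" and Y :: "'y set"
  assumes "Y \<noteq> {}" and nonneg: "\<And>z. z \<in> unit_cube \<Longrightarrow> 0 \<le> u z"
    and preserves: "\<And>p q. p \<in> unit_cube \<Longrightarrow> q \<in> unit_cube \<Longrightarrow>
      (\<forall>i. sqeq Y (\<lambda>_. p i) (\<lambda>_. q i)) \<Longrightarrow> sqeq Y (\<lambda>_. u p) (\<lambda>_. u q)"
  shows "zero_pattern_invariant u"
proof (intro ballI impI)
  fix p q :: "'i \<Rightarrow> real"
  assume pq: "p \<in> unit_cube" "q \<in> unit_cube" and pattern: "\<forall>i. p i = 0 \<longleftrightarrow> q i = 0"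
  have "\<forall>i. sqeq Y (\<lambda>_. p i) (\<lambda>_. q i)"
    using pattern unit_cube_nonneg[OF pq(1)] unit_cube_nonneg[OF pq(2)]
    by (simp add: sqeq_const_iff[OF \<open>Y \<noteq> {}\<close>] order.eq_iff)
  then have "u p \<le> 0 \<longleftrightarrow> u q \<le> 0"
    using preserves[OF pq] sqeq_const_iff[OF \<open>Y \<noteq> {}\<close>] by blast
  then show "u p = 0 \<and> u q = 0 \<or> 0 < u p \<and> 0 < u q"
    using nonneg[OF pq(1)] nonneg[OF pq(2)] by force
qed

lemma zero_pattern_invariant_iff_zero_set_union:
  fixes u :: "('i::finite \<Rightarrow> real) \<Rightarrow> real"
  assumes nonneg: "\<And>z. z \<in> unit_cube \<Longrightarrow> 0 \<le> u z"
  shows "zero_pattern_invariant u \<longleftrightarrow>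
    (\<exists>A. {z\<in>unit_cube. u z = 0} = (\<Union>K\<in>A. {z\<in>unit_cube. \<forall>i. z i = 0 \<longleftrightarrow> i \<in> K}))"
proof
  assume inv: "zero_pattern_invariant u"
  let ?A = "(\<lambda>z. {i. z i = 0}) ` {z\<in>unit_cube. u z = 0}"
  have "{z\<in>unit_cube. u z = 0} = (\<Union>K\<in>?A. {z\<in>unit_cube. \<forall>i. z i = 0 \<longleftrightarrow> i \<in> K})"
  proof (intro set_eqI iffI)
    fix z
    assume "z \<in> {z\<in>unit_cube. u z = 0}"
    then show "z \<in> (\<Union>K\<in>?A. {z\<in>unit_cube. \<forall>i. z i = 0 \<longleftrightarrow> i \<in> K})"
      by (intro UN_I[of "{i. z i = 0}"]) auto
  next
    fix z
    assume "z \<in> (\<Union>K\<in>?A. {z\<in>unit_cube. \<forall>i. z i = 0 \<longleftrightarrow> i \<in> K})"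
    then obtain w where w: "w \<in> unit_cube" "u w = 0" and z: "z \<in> unit_cube"
      and pattern: "\<forall>i. w i = 0 \<longleftrightarrow> z i = 0"
      by auto
    then show "z \<in> {z\<in>unit_cube. u z = 0}"
      using inv[rule_format, OF w(1) z] pattern w(2) by simp
  qed
  then show "\<exists>A. {z\<in>unit_cube. u z = 0} = (\<Union>K\<in>A. {z\<in>unit_cube. \<forall>i. z i = 0 \<longleftrightarrow> i \<in> K})" ..
next
  assume "\<exists>A. {z\<in>unit_cube. u z = 0} = (\<Union>K\<in>A. {z\<in>unit_cube. \<forall>i. z i = 0 \<longleftrightarrow> i \<in> K})"
  then obtain A where A: "{z\<in>unit_cube. u z = 0} = (\<Union>K\<in>A. {z\<in>unit_cube. \<forall>i. z i = 0 \<longleftrightarrow> i \<in> K})" ..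
  have vanish: "u q = 0"
    if p: "p \<in> unit_cube" "u p = 0" and q: "q \<in> unit_cube" and pattern: "\<forall>i. p i = 0 \<longleftrightarrow> q i = 0" for p q
  proof -
    have "p \<in> (\<Union>K\<in>A. {z\<in>unit_cube. \<forall>i. z i = 0 \<longleftrightarrow> i \<in> K})"
      using A p by blast
    then obtain K where "K \<in> A" "\<forall>i. p i = 0 \<longleftrightarrow> i \<in> K"
      by blast
    then have "q \<in> (\<Union>K\<in>A. {z\<in>unit_cube. \<forall>i. z i = 0 \<longleftrightarrow> i \<in> K})"
      using q pattern by auto
    then show ?thesis
      unfolding A[symmetric] by simp
  qed
  show "zero_pattern_invariant u"
  proof (intro ballI impI)
    fix p q :: "'i \<Rightarrow> real"
    assume pq: "p \<in> unit_cube" "q \<in> unit_cube" and pattern: "\<forall>i. p i = 0 \<longleftrightarrow> q i = 0"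
    then have "u p = 0 \<longleftrightarrow> u q = 0"
      using vanish[of p q] vanish[of q p] by auto
    then show "u p = 0 \<and> u q = 0 \<or> 0 < u p \<and> 0 < u q"
      using nonneg[OF pq(1)] nonneg[OF pq(2)] by linarith
  qed
qed

theorem mainTheorem7:
  fixes u :: "('i::finite \<Rightarrow> real) \<Rightarrow> real"
  assumes "ucont_cube u"
  shows "((\<forall>(Y::'y set) d (\<phi>::'i \<Rightarrow> 'y \<Rightarrow> real) \<phi>'.
             Metric_space Y d \<and> Metric_space.mcomplete Y d \<and> (\<forall>x\<in>Y. \<forall>y\<in>Y. d x y \<le> 1) \<and>
             (\<forall>i. ucont_unit Y d (\<phi> i) \<and> ucont_unit Y d (\<phi>' i) \<and> sqeq Y (\<phi> i) (\<phi>' i))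
             \<longrightarrow> sqeq Y (\<lambda>y. u (\<lambda>i. \<phi> i y)) (\<lambda>y. u (\<lambda>i. \<phi>' i y)))
          \<longleftrightarrow>
          (\<forall>p\<in>unit_cube. \<forall>q\<in>unit_cube. (\<forall>i. p i = 0 \<longleftrightarrow> q i = 0) \<longrightarrow>
             (u p = 0 \<and> u q = 0) \<or> (u p > 0 \<and> u q > 0)))
       \<and>
         ((\<forall>p\<in>unit_cube. \<forall>q\<in>unit_cube. (\<forall>i. p i = 0 \<longleftrightarrow> q i = 0) \<longrightarrow>
             (u p = 0 \<and> u q = 0) \<or> (u p > 0 \<and> u q > 0))
          \<longleftrightarrow>
          (\<exists>A :: 'i set set. {z\<in>unit_cube. u z = 0} =
             (\<Union>K\<in>A. {z\<in>unit_cube. \<forall>i. z i = 0 \<longleftrightarrow> i \<in> K})))"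
  (is "(?P1 \<longleftrightarrow> _) \<and> _")
proof -
  have nonneg: "\<And>z. z \<in> unit_cube \<Longrightarrow> 0 \<le> u z"
    using ucont_cube_nonneg[OF assms] .
  have "?P1 \<longleftrightarrow> zero_pattern_invariant u"
  proof
    assume P1: ?P1
    have "sqeq (UNIV::'y set) (\<lambda>_. u p) (\<lambda>_. u q)"
      if "p \<in> unit_cube" "q \<in> unit_cube" "\<forall>i. sqeq (UNIV::'y set) (\<lambda>_. p i) (\<lambda>_. q i)" for p q
    proof (rule P1[rule_format], intro conjI allI)
      show "Metric_space UNIV discrete_metric.dd"
        by (rule metric_M_dd)
      show "Metric_space.mcomplete UNIV discrete_metric.dd"
        by (rule discrete_metric.mcomplete_discrete_metric)
    qed (use that in \<open>auto simp: discrete_metric.dd_le1 ucont_unit_const unit_cube_def\<close>)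
    then show "zero_pattern_invariant u"
      by (intro zero_pattern_invariant_if_sqeq_on_constants[of "UNIV::'y set"] nonneg) auto
  next
    assume inv: "zero_pattern_invariant u"
    show ?P1
    proof (intro allI impI)
      fix Y :: "'y set" and d and \<phi> \<phi>' :: "'i \<Rightarrow> 'y \<Rightarrow> real"
      assume "Metric_space Y d \<and> Metric_space.mcomplete Y d \<and> (\<forall>x\<in>Y. \<forall>y\<in>Y. d x y \<le> 1) \<and>
        (\<forall>i. ucont_unit Y d (\<phi> i) \<and> ucont_unit Y d (\<phi>' i) \<and> sqeq Y (\<phi> i) (\<phi>' i))"
      then have h: "\<forall>i. ucont_unit Y d (\<phi> i) \<and> ucont_unit Y d (\<phi>' i) \<and> sqeq Y (\<phi> i) (\<phi>' i)"
        by blast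
      then have cube: "(\<lambda>i. \<phi> i y) \<in> unit_cube" "(\<lambda>i. \<phi>' i y) \<in> unit_cube" if "y \<in> Y" for y
        using that by (auto simp: ucont_unit_def unit_cube_def)
      show "sqeq Y (\<lambda>y. u (\<lambda>i. \<phi> i y)) (\<lambda>y. u (\<lambda>i. \<phi>' i y))"
        unfolding sqeq_def
        by (intro conjI sqle_comp_if_zero_pattern_invariant[OF assms inv])
          (use cube h in \<open>auto simp: sqeq_def\<close>)
    qed
  qed
  then show ?thesis
    using zero_pattern_invariant_iff_zero_set_union[OF nonneg] by (rule conjI)
qed

end
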